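(* Let $d\ge3$ and $k\in\mathbb Z_{\geq0}$. Let $\mathbf z_{k+1},\dots,\mathbf z_{k+d}$ be a basis of $\mathbb Z^d$ with $|\underline{\mathbf z_{k+1}}|\leq|\underline{\mathbf z_{k+2}}|\leq|\underline{\mathbf z_{k+3}}|$ and $\langle\underline{\mathbf z_{k+1}},\underline{\mathbf z_{k+2}}\rangle\leq0$. If $d\geq4$, assume moreover $\det\underline\Lambda_{k+1,n}>|\underline{\mathbf z_{k+2}}|\det\underline\Lambda_{k+1,n-1}$ for $n=3,\dots,d-1$. Let $\boldsymbol\alpha$ be any point of $\mathfrak S_{k+1}\cap\operatorname{int}\mathfrak S_{k+2}$ satisfying $\langle\boldsymbol\alpha,\mathbf z_{k+2}\rangle\cdot\langle\boldsymbol\alpha_{k+2},\mathbf z_{k+1}\rangle\geq0$. Then: (i) for any $\mathbf z\in\mathbb Z^d$ with $|\underline{\mathbf z}|\leq|\underline{\mathbf z_{k+2}}|$, $\mathbf z\neq\mathbf 0,\pm\mathbf z_{k+2}$, we have $|L_{\boldsymbol\alpha}(\mathbf z)|\geq|L_{\boldsymbol\alpha}(\mathbf z_{k+1})|>|L_{\boldsymbol\alpha}(\mathbf z_{k+2})|$; (ii) $\dfrac{1}{2D_{k+2,d-1}B_{k+1}^{d-1}}\leq|L_{\boldsymbol\alpha}(\mathbf z_{k+1})|\cdot|\underline{\mathbf z_{k+1}}|^{d-1}\leq\dfrac{3}{2D_{k+2,d-1}B_{k+1}^{d-1}}$; (iii) for any $\mathbf z\in\mathbb Z^d$ which is not a multiple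 of $\mathbf z_{k+1}$, is different from $\pm\mathbf z_{k+2}$, and satisfies $|\underline{\mathbf z_{k+1}}|\leq|\underline{\mathbf z}|\leq|\underline{\mathbf z_{k+2}}|$, we have \[|L_{\boldsymbol\alpha}(\mathbf z)|\cdot|\underline{\mathbf z}|^{d-1}\geq\min\Big(\frac{1}{2D_{k+1,d-1}},\ \frac{D_{k+1,2}^{d-1}}{2D_{k+2,d-1}B_{k+1}^{d-1}}\Big).\]
   Context: $|\cdot|$ is the Euclidean norm, $\langle\cdot,\cdot\rangle$ the standard inner product. For $\mathbf x=(x_1,\dots,x_d)\in\mathbb R^d$ write $\underline{\mathbf x}=(x_1,\dots,x_{d-1})$. Let $\pi_d=\{\mathbf x\in\mathbb R^d:x_d=1\}$ and $L_{\boldsymbol\alpha}(\mathbf x)=\langle\boldsymbol\alpha,\mathbf x\rangle$ for $\boldsymbol\alpha\in\pi_d$. For given vectors $\mathbf z_1,\mathbf z_2,\dots\in\mathbb Z^d$: $\det\underline\Lambda_{k,l}=|\underline{\mathbf z_k}\wedge\dots\wedge\underline{\mathbf z_{k+l-1}}|$ ($1\le l\le d-1$); $D_{k,l}=\det\underline\Lambda_{k,l}/|\underline{\mathbf z_k}|^l$; $B_k=|\underline{\mathbf z_{k+1}}|/|\underline{\mathbf z_k}|$; $R_k=1/(2|\underline{\mathbf z_{k+1}}|\det\underline\Lambda_{k,d-1})$; when $\underline{\mathbf z_k},\dots,\underline{\mathbf z_{k+d-2}}$ are linearly independent, $\boldsymbol\alpha_k$ is the unique point of $\pi_d$ orthogonal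 to $\mathbf z_k,\dots,\mathbf z_{k+d-2}$ and $\mathfrak S_k=\{\mathbf x\in\pi_d:|\mathbf x-\boldsymbol\alpha_k|\le R_k\}$, a closed ball in the affine hyperplane $\pi_d$, whose interior $\operatorname{int}\mathfrak S_k$ is taken relative to $\pi_d$. The quantities $B_{k+2}$, $R_{k+2}$, $\mathfrak S_{k+2}$ involve $\mathbf z_{k+d+1}$, which is assumed given. Whenever $\boldsymbol\alpha_k$ or $\mathfrak S_k$ appears it is implicitly assumed well defined. *)

theory Defs
  imports Complex_Main "Jordan_Normal_Form.Determinant"
begin

text \<open>Vectors of Z^d (resp. R^d) are functions nat => int (resp. real) vanishing
  at coordinates >= d; coordinate x_i of the paper is x (i-1).
  The given sequence z_1, z_2, ... is z :: nat => nat => int (z 0 unused).\<close>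

definition ivecs :: "nat \<Rightarrow> (nat \<Rightarrow> int) set" where
  "ivecs d = {v. \<forall>i\<ge>d. v i = 0}"

definition rvecs :: "nat \<Rightarrow> (nat \<Rightarrow> real) set" where
  "rvecs d = {v. \<forall>i\<ge>d. v i = 0}"

definition ulnorm :: "nat \<Rightarrow> (nat \<Rightarrow> int) \<Rightarrow> real" where
  "ulnorm d v = sqrt (\<Sum>i<d-1. (real_of_int (v i))\<^sup>2)"

definition ulinner :: "nat \<Rightarrow> (nat \<Rightarrow> int) \<Rightarrow> (nat \<Rightarrow> int) \<Rightarrow> real" where
  "ulinner d v w = (\<Sum>i<d-1. real_of_int (v i) * real_of_int (w i))"

definition rnorm :: "nat \<Rightarrow> (nat \<Rightarrow> real) \<Rightarrow> real" where
  "rnorm d x = sqrt (\<Sum>i<d. (x i)\<^sup>2)"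

definition pi_d :: "nat \<Rightarrow> (nat \<Rightarrow> real) set" where
  "pi_d d = {x \<in> rvecs d. x (d-1) = 1}"

definition Lf :: "nat \<Rightarrow> (nat \<Rightarrow> real) \<Rightarrow> (nat \<Rightarrow> int) \<Rightarrow> real" where
  "Lf d a x = (\<Sum>i<d. a i * real_of_int (x i))"

text \<open>Norm of the wedge product of l vectors: square root of the Gram determinant.
  detL d z k l = |underline z_k /\ ... /\ underline z_(k+l-1)|\<close>
definition detL :: "nat \<Rightarrow> (nat \<Rightarrow> nat \<Rightarrow> int) \<Rightarrow> nat \<Rightarrow> nat \<Rightarrow> real" where
  "detL d z k l = sqrt (det (mat l l (\<lambda>(i,j). ulinner d (z (k+i)) (z (k+j)))))"

definition Dq :: "nat \<Rightarrow> (nat \<Rightarrow> nat \<Rightarrow> int) \<Rightarrow> nat \<Rightarrow> nat \<Rightarrow> real" where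
  "Dq d z k l = detL d z k l / (ulnorm d (z k)) ^ l"

definition Bq :: "nat \<Rightarrow> (nat \<Rightarrow> nat \<Rightarrow> int) \<Rightarrow> nat \<Rightarrow> real" where
  "Bq d z k = ulnorm d (z (k+1)) / ulnorm d (z k)"

definition Rq :: "nat \<Rightarrow> (nat \<Rightarrow> nat \<Rightarrow> int) \<Rightarrow> nat \<Rightarrow> real" where
  "Rq d z k = 1 / (2 * ulnorm d (z (k+1)) * detL d z k (d-1))"

definition ul_indep :: "nat \<Rightarrow> (nat \<Rightarrow> nat \<Rightarrow> int) \<Rightarrow> nat \<Rightarrow> bool" where
  "ul_indep d z k = (\<forall>c :: nat \<Rightarrow> real.
     (\<forall>i<d-1. (\<Sum>j<d-1. c j * real_of_int (z (k+j) i)) = 0) \<longrightarrow> (\<forall>j<d-1. c j = 0))"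

definition alphaq :: "nat \<Rightarrow> (nat \<Rightarrow> nat \<Rightarrow> int) \<Rightarrow> nat \<Rightarrow> (nat \<Rightarrow> real)" where
  "alphaq d z k = (THE a. a \<in> pi_d d \<and> (\<forall>j<d-1. Lf d a (z (k+j)) = 0))"

definition Sq :: "nat \<Rightarrow> (nat \<Rightarrow> nat \<Rightarrow> int) \<Rightarrow> nat \<Rightarrow> (nat \<Rightarrow> real) set" where
  "Sq d z k = {x \<in> pi_d d. rnorm d (\<lambda>i. x i - alphaq d z k i) \<le> Rq d z k}"

definition rel_int_pi :: "nat \<Rightarrow> (nat \<Rightarrow> real) set \<Rightarrow> (nat \<Rightarrow> real) set" where
  "rel_int_pi d S = {x \<in> S. \<exists>e>0. \<forall>y\<in>pi_d d. rnorm d (\<lambda>i. y i - x i) < e \<longrightarrow> y \<in> S}"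

definition is_Zbasis :: "nat \<Rightarrow> (nat \<Rightarrow> nat \<Rightarrow> int) \<Rightarrow> nat \<Rightarrow> bool" where
  "is_Zbasis d z k = ((\<forall>j\<in>{1..d}. z (k+j) \<in> ivecs d) \<and>
     (\<forall>w\<in>ivecs d. \<exists>!c. (\<forall>j. j \<notin> {1..d} \<longrightarrow> c j = 0) \<and>
        (\<forall>i<d. w i = (\<Sum>j=1..d. c j * z (k+j) i))))"

end

theory Submission
  imports Defs "HOL-Analysis.Convex"
begin

text \<open>Write g1 = det Lambda(k+1,d-1) and g2 = det Lambda(k+2,d-1). Since z (k+1), ..., z (k+d) is a
  basis of Z^d, the centre alpha(k+2) vanishes on z (k+2), ..., z (k+d) and takes the value
  +-1/g2 on z (k+1); the centre alpha(k+1) vanishes on z (k+1), ..., z (k+d-1) and takes the value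
  +-1/g1 on z (k+d). For points a, b of pi_d, |L_a(w) - L_b(w)| <= |a - b| |underline w|, so the
  radii of the two balls make L_alpha(z (k+1)) lie within 1/(2 g2) of +-1/g2, which is (ii),
  and make |L_alpha(w)| >= 1/(2 g1) for every w with |underline w| <= |underline z (k+2)| that
  involves z (k+d).

  For the remaining short vectors the determinant growth hypothesis excludes z (k+3), ...,
  z (k+d-1) (a combination involving z (k+n) is at least det Lambda(k+1,n) / det Lambda(k+1,n-1)
  long), so they lie in the plane of z (k+1), z (k+2). This length-ordered obtuse pair is
  reduced, leaving only x z (k+1) + y z (k+2) with |x| >= 2, y = 0, or y = x; the
  sign hypothesis settles y = x, giving (i). For (iii), a plane vector with y <> 0 has length
  at least det Lambda(k+1,2) / |underline z (k+1)|.\<close>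

section \<open>Gram determinants\<close>

definition lin_indep :: "nat \<Rightarrow> (nat \<Rightarrow> nat \<Rightarrow> real) \<Rightarrow> nat \<Rightarrow> bool" where
  "lin_indep m u l \<longleftrightarrow> (\<forall>x. (\<forall>t<m. (\<Sum>i<l. x i * u i t) = 0) \<longrightarrow> (\<forall>i<l. x i = 0))"

definition gram :: "nat \<Rightarrow> (nat \<Rightarrow> nat \<Rightarrow> real) \<Rightarrow> nat \<Rightarrow> real" where
  "gram m u l = det (mat l l (\<lambda>(i,j). \<Sum>t<m. u i t * u j t))"

lemma lin_indep_mono:
  assumes "lin_indep m u N" and "l \<le> N"
  shows "lin_indep m u l"
  unfolding lin_indep_def
proof (intro allI impI)
  fix x :: "nat \<Rightarrow> real" and i
  assume h: "\<forall>t<m. (\<Sum>i<l. x i * u i t) = 0" and i: "i < l"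
  define y where "y j = (if j < l then x j else 0)" for j
  have "(\<Sum>i<N. y i * u i t) = (\<Sum>i<l. x i * u i t)" for t
  proof -
    have "(\<Sum>i<N. y i * u i t) = (\<Sum>i\<in>{..<l} \<union> {l..<N}. y i * u i t)"
      using assms(2) by (intro sum.cong) auto
    also have "\<dots> = (\<Sum>i<l. y i * u i t) + (\<Sum>i\<in>{l..<N}. y i * u i t)"
      by (rule sum.union_disjoint) auto
    also have "\<dots> = (\<Sum>i<l. x i * u i t)" by (simp add: y_def)
    finally show ?thesis .
  qed
  then have "\<forall>i<N. y i = 0" using assms(1) h by (simp add: lin_indep_def)
  then show "x i = 0" using i assms(2) by (auto simp: y_def dest!: spec[of _ i])
qed

lemma gram_cong:
  assumes "\<And>i t. i < l \<Longrightarrow> t < m \<Longrightarrow> u i t = w i t"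
  shows "gram m u l = gram m w l"
  unfolding gram_def using assms by (intro arg_cong[where f = det] eq_matI) auto

lemma gram_one: "gram m u 1 = (\<Sum>t<m. (u 0 t)\<^sup>2)"
  by (simp add: gram_def det_single power2_eq_square)

lemma det_mat_2: "det (mat 2 2 f) = f (0,0) * f (1,1) - f (1,0) * (f (0,1) :: real)"
proof -
  have one: "mat_delete (mat 2 2 f) i 0 \<in> carrier_mat 1 1" for i by (simp add: mat_delete_def)
  have "det (mat 2 2 f) = (\<Sum>i<2. mat 2 2 f $$ (i,0) * cofactor (mat 2 2 f) i 0)"
    by (rule laplace_expansion_column) auto
  then show ?thesis
    using one[of 0] one[of 1]
    by (simp add: numeral_2_eq_2 cofactor_def det_single mat_delete_def)
qed

lemma gram_two:
  "gram m u 2 = (\<Sum>t<m. (u 0 t)\<^sup>2) * (\<Sum>t<m. (u 1 t)\<^sup>2) - (\<Sum>t<m. u 0 t * u 1 t)\<^sup>2"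
  by (simp add: gram_def det_mat_2 power2_eq_square mult.commute)

lemma gram_nonzero:
  assumes indep: "lin_indep m u n"
  shows "gram m u n \<noteq> 0"
proof
  define A where "A = mat n n (\<lambda>(i,j). \<Sum>t<m. u i t * u j t)"
  assume "gram m u n = 0"
  then obtain x where x: "x \<in> carrier_vec n" "x \<noteq> 0\<^sub>v n" "A *\<^sub>v x = 0\<^sub>v n"
    using det_0_iff_vec_prod_zero_field[of A n] by (auto simp: A_def gram_def)
  define s where "s t = (\<Sum>i<n. x $ i * u i t)" for t
  have "(\<Sum>t<m. (s t)\<^sup>2) = (\<Sum>i<n. x $ i * (A *\<^sub>v x) $ i)"
  proof -
    have "(\<Sum>t<m. (s t)\<^sup>2) = (\<Sum>t<m. \<Sum>i<n. \<Sum>j<n. (x $ i * u i t) * (x $ j * u j t))"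
      by (simp add: s_def power2_eq_square sum_product)
    also have "\<dots> = (\<Sum>i<n. \<Sum>t<m. \<Sum>j<n. (x $ i * u i t) * (x $ j * u j t))"
      by (rule sum.swap)
    also have "\<dots> = (\<Sum>i<n. \<Sum>j<n. \<Sum>t<m. (x $ i * u i t) * (x $ j * u j t))"
      by (rule sum.cong[OF refl], rule sum.swap)
    also have "\<dots> = (\<Sum>i<n. x $ i * (\<Sum>j<n. (\<Sum>t<m. u i t * u j t) * x $ j))"
      by (simp add: sum_distrib_left sum_distrib_right mult_ac)
    also have "\<dots> = (\<Sum>i<n. x $ i * (A *\<^sub>v x) $ i)"
      using x(1) by (intro sum.cong) (auto simp: A_def scalar_prod_def lessThan_atLeast0)
    finally show ?thesis .
  qed
  also have "\<dots> = 0" using x(3) by simp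
  finally have "\<forall>t<m. s t = 0" by (simp add: sum_nonneg_eq_0_iff)
  then have "\<forall>i<n. x $ i = 0"
    using indep unfolding lin_indep_def s_def by (elim allE[of _ "\<lambda>i. x $ i"]) blast
  then have "x = 0\<^sub>v n" using x(1) by (intro eq_vecI) auto
  then show False using x(2) by simp
qed

lemma gram_normal_equations:
  assumes indep: "lin_indep m u n"
  obtains lam where "\<And>i. i < n \<Longrightarrow> (\<Sum>t<m. (u n t - (\<Sum>j<n. lam j * u j t)) * u i t) = 0"
proof -
  define A where "A = mat n n (\<lambda>(i,j). \<Sum>t<m. u i t * u j t)"
  have Acarr: "A \<in> carrier_mat n n" by (simp add: A_def)
  have detA: "det A \<noteq> 0" using gram_nonzero[OF indep] by (simp add: A_def gram_def)
  define b where "b = vec n (\<lambda>i. \<Sum>t<m. u n t * u i t)"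
  define lv where "lv = (1 / det A) \<cdot>\<^sub>v (adj_mat A *\<^sub>v b)"
  have Alv: "A *\<^sub>v lv = b"
  proof -
    have "A *\<^sub>v lv = (1 / det A) \<cdot>\<^sub>v ((A * adj_mat A) *\<^sub>v b)"
      using adj_mat(1)[OF Acarr] Acarr by (simp add: lv_def b_def mult_mat_vec assoc_mult_mat_vec)
    also have "\<dots> = (1 / det A) \<cdot>\<^sub>v ((det A \<cdot>\<^sub>m 1\<^sub>m n) *\<^sub>v b)"
      by (simp add: adj_mat(2)[OF Acarr])
    also have "\<dots> = b"
      using detA by (intro eq_vecI) (auto simp: b_def)
    finally show ?thesis .
  qed
  have "dim_vec lv = n" using adj_mat(1)[OF Acarr] by (simp add: lv_def b_def)
  then have normal: "(\<Sum>j<n. lv $ j * (\<Sum>t<m. u i t * u j t)) = (\<Sum>t<m. u n t * u i t)"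
    if "i < n" for i
    using arg_cong[OF Alv, of "\<lambda>v. v $ i"] that
    by (simp add: A_def b_def scalar_prod_def lessThan_atLeast0 mult.commute)
  show ?thesis
  proof (rule that[of "\<lambda>j. lv $ j"])
    fix i assume i: "i < n"
    have "(\<Sum>t<m. (u n t - (\<Sum>j<n. lv $ j * u j t)) * u i t)
        = (\<Sum>t<m. u n t * u i t) - (\<Sum>t<m. \<Sum>j<n. lv $ j * (u i t * u j t))"
      by (simp add: right_diff_distrib left_diff_distrib sum_subtractf sum_distrib_left
          sum_distrib_right mult_ac)
    also have "(\<Sum>t<m. \<Sum>j<n. lv $ j * (u i t * u j t)) = (\<Sum>j<n. lv $ j * (\<Sum>t<m. u i t * u j t))"
      by (subst sum.swap) (simp add: sum_distrib_left)
    finally show "(\<Sum>t<m. (u n t - (\<Sum>j<n. lv $ j * u j t)) * u i t) = 0"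
      using normal[OF i] by simp
  qed
qed

lemma mult_transpose_mult:
  fixes E U :: "'a :: comm_semiring_0 mat"
  assumes E: "E \<in> carrier_mat n n" and U: "U \<in> carrier_mat n m"
  shows "(E * U) * transpose_mat (E * U) = E * (U * transpose_mat U) * transpose_mat E"
proof -
  have "(E * U) * transpose_mat (E * U) = (E * U) * (transpose_mat U * transpose_mat E)"
    by (simp add: transpose_mult[OF E U])
  also have "\<dots> = E * (U * (transpose_mat U * transpose_mat E))"
    by (rule assoc_mult_mat[OF E U]) (use U E in auto)
  also have "U * (transpose_mat U * transpose_mat E) = (U * transpose_mat U) * transpose_mat E"
    by (rule assoc_mult_mat[symmetric, OF U]) (use U E in auto)
  also have "E * ((U * transpose_mat U) * transpose_mat E) = E * (U * transpose_mat U) * transpose_mat E"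
    by (rule assoc_mult_mat[symmetric, OF E]) (use U E in auto)
  finally show ?thesis .
qed

lemma gram_subtract_combination:
  "gram m (\<lambda>i t. if i = n then u n t - (\<Sum>j<n. lam j * u j t) else u i t) (Suc n) = gram m u (Suc n)"
proof -
  define w where "w i t = (if i = n then u n t - (\<Sum>j<n. lam j * u j t) else u i t)" for i t
  define U where "U = mat (Suc n) m (\<lambda>(i,t). u i t)"
  define E where "E = mat (Suc n) (Suc n) (\<lambda>(i,j). if i = n then (if j = n then 1 else - lam j)
                                                   else (if i = j then 1 else 0))"
  define W where "W = mat (Suc n) m (\<lambda>(i,t). w i t)"
  have Ucarr: "U \<in> carrier_mat (Suc n) m" by (simp add: U_def)
  have Ecarr: "E \<in> carrier_mat (Suc n) (Suc n)" by (simp add: E_def)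
  have if01: "(c::real) * (if P then 1 else 0) * y = (if P then c * y else 0)" for c P y by simp
  have EU: "E * U = W"
  proof (rule eq_matI)
    fix i t assume "i < dim_row W" "t < dim_col W"
    then have it: "i < Suc n" "t < m" by (auto simp: W_def)
    show "(E * U) $$ (i, t) = W $$ (i, t)"
    proof (cases "i = n")
      case True
      have "(E * U) $$ (i, t) = (\<Sum>j<Suc n. (if j = n then 1 else - lam j) * u j t)"
        using it True by (simp add: E_def U_def scalar_prod_def lessThan_atLeast0)
      also have "\<dots> = u n t - (\<Sum>j<n. lam j * u j t)"
        by (simp add: sum_negf)
      finally show ?thesis using it True by (simp add: W_def w_def)
    next
      case False
      have "(E * U) $$ (i, t) = (\<Sum>j<Suc n. (if i = j then 1 else 0) * u j t)"
        using it False by (simp add: E_def U_def scalar_prod_def lessThan_atLeast0)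
      also have "\<dots> = u i t" using it by (simp add: if01[where c=1, simplified])
      finally show ?thesis using it False by (simp add: W_def w_def)
    qed
  qed (auto simp: E_def U_def W_def)
  have detE: "det E = 1"
  proof -
    have "det E = prod_list (diag_mat E)"
      by (rule det_lower_triangular[OF _ Ecarr]) (auto simp: E_def)
    also have "diag_mat E = map (\<lambda>i. 1) [0..<Suc n]"
      unfolding diag_mat_def by (rule map_cong) (auto simp: E_def)
    finally show ?thesis by (simp add: map_replicate_const)
  qed
  have "W * transpose_mat W = E * (U * transpose_mat U) * transpose_mat E"
    unfolding EU[symmetric] by (rule mult_transpose_mult[OF Ecarr Ucarr])
  then have "det (W * transpose_mat W) = det (U * transpose_mat U)"
    using Ucarr Ecarr detE det_transpose[OF Ecarr] by (simp add: det_mult[of _ "Suc n"])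
  moreover have "mat (Suc n) (Suc n) (\<lambda>(i,j). \<Sum>t<m. u i t * u j t) = U * transpose_mat U"
    by (rule eq_matI) (auto simp: U_def scalar_prod_def lessThan_atLeast0)
  moreover have "mat (Suc n) (Suc n) (\<lambda>(i,j). \<Sum>t<m. w i t * w j t) = W * transpose_mat W"
    by (rule eq_matI) (auto simp: W_def scalar_prod_def lessThan_atLeast0)
  ultimately show ?thesis by (simp add: gram_def w_def)
qed

lemma gram_Suc_if_orthogonal:
  assumes "\<And>i. i < n \<Longrightarrow> (\<Sum>t<m. w n t * w i t) = 0"
  shows "gram m w (Suc n) = gram m w n * (\<Sum>t<m. (w n t)\<^sup>2)"
proof -
  define G where "G = mat (Suc n) (Suc n) (\<lambda>(i,j). \<Sum>t<m. w i t * w j t)"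
  have "gram m w (Suc n) = (\<Sum>i<Suc n. G $$ (i, n) * cofactor G i n)"
    unfolding gram_def G_def[symmetric] by (rule laplace_expansion_column) (auto simp: G_def)
  also have "\<dots> = G $$ (n, n) * cofactor G n n"
    using assms by (simp add: G_def mult.commute)
  also have "cofactor G n n = gram m w n"
  proof -
    have "mat_delete G n n = mat n n (\<lambda>(i,j). \<Sum>t<m. w i t * w j t)"
      by (rule eq_matI) (auto simp: mat_delete_def G_def)
    then show ?thesis by (simp add: cofactor_def gram_def)
  qed
  finally show ?thesis by (simp add: G_def power2_eq_square mult.commute)
qed

lemma gram_Suc_residual:
  assumes indep: "lin_indep m u (Suc n)"
  obtains lam where "\<And>i. i < n \<Longrightarrow> (\<Sum>t<m. (u n t - (\<Sum>j<n. lam j * u j t)) * u i t) = 0"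
    and "gram m u (Suc n) = gram m u n * (\<Sum>t<m. (u n t - (\<Sum>j<n. lam j * u j t))\<^sup>2)"
proof -
  obtain lam where orth: "\<And>i. i < n \<Longrightarrow> (\<Sum>t<m. (u n t - (\<Sum>j<n. lam j * u j t)) * u i t) = 0"
    using gram_normal_equations lin_indep_mono[OF indep le_SucI[OF order_refl]] by blast
  define w where "w i t = (if i = n then u n t - (\<Sum>j<n. lam j * u j t) else u i t)" for i t
  have "gram m u (Suc n) = gram m w (Suc n)"
    unfolding w_def by (rule gram_subtract_combination[symmetric])
  also have "\<dots> = gram m w n * (\<Sum>t<m. (w n t)\<^sup>2)"
    by (rule gram_Suc_if_orthogonal) (simp add: w_def orth)
  also have "gram m w n = gram m u n"
    by (rule gram_cong) (simp add: w_def)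
  finally have "gram m u (Suc n) = gram m u n * (\<Sum>t<m. (u n t - (\<Sum>j<n. lam j * u j t))\<^sup>2)"
    by (simp add: w_def)
  with orth show ?thesis by (rule that)
qed

lemma gram_pos:
  assumes indep: "lin_indep m u N" and "l \<le> N"
  shows "gram m u l > 0"
  using assms(2)
proof (induction l)
  case 0
  then show ?case by (simp add: gram_def)
next
  case (Suc l)
  have ind: "lin_indep m u (Suc l)" using lin_indep_mono[OF indep Suc.prems] .
  obtain lam where "gram m u (Suc l) = gram m u l * (\<Sum>t<m. (u l t - (\<Sum>j<l. lam j * u j t))\<^sup>2)"
    using gram_Suc_residual[OF ind] by blast
  moreover have "gram m u (Suc l) \<noteq> 0" by (rule gram_nonzero[OF ind])
  moreover have "(\<Sum>t<m. (u l t - (\<Sum>j<l. lam j * u j t))\<^sup>2) \<ge> 0" by (simp add: sum_nonneg)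
  ultimately show ?case using Suc by (simp add: zero_less_mult_iff)
qed

text \<open>gram m u (Suc n) / gram m u n is the squared distance of the last row from the span
  of the others.\<close>
lemma gram_coeff_bound:
  assumes indep: "lin_indep m u (Suc n)"
  shows "(c n)\<^sup>2 * gram m u (Suc n) \<le> gram m u n * (\<Sum>t<m. (\<Sum>i<Suc n. c i * u i t)\<^sup>2)"
proof -
  obtain lam where orth: "\<And>i. i < n \<Longrightarrow> (\<Sum>t<m. (u n t - (\<Sum>j<n. lam j * u j t)) * u i t) = 0"
    and G: "gram m u (Suc n) = gram m u n * (\<Sum>t<m. (u n t - (\<Sum>j<n. lam j * u j t))\<^sup>2)"
    using gram_Suc_residual[OF indep] by blast
  define q where "q t = u n t - (\<Sum>j<n. lam j * u j t)" for t
  define p where "p t = (\<Sum>i<n. (c i + c n * lam i) * u i t)" for t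
  have gpos: "gram m u n > 0" using gram_pos[OF indep, of n] by simp
  have split: "(\<Sum>i<Suc n. c i * u i t) = p t + c n * q t" for t
    by (simp add: p_def q_def algebra_simps sum.distrib sum_distrib_left)
  have pq: "(\<Sum>t<m. p t * q t) = 0"
  proof -
    have "(\<Sum>t<m. p t * q t) = (\<Sum>t<m. \<Sum>i<n. (c i + c n * lam i) * (q t * u i t))"
      by (simp add: p_def sum_distrib_left sum_distrib_right mult_ac)
    also have "\<dots> = (\<Sum>i<n. (c i + c n * lam i) * (\<Sum>t<m. q t * u i t))"
      by (subst sum.swap) (simp add: sum_distrib_left)
    also have "\<dots> = 0" using orth by (simp add: q_def)
    finally show ?thesis .
  qed
  have "(\<Sum>t<m. (\<Sum>i<Suc n. c i * u i t)\<^sup>2)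
      = (\<Sum>t<m. (p t)\<^sup>2) + 2 * c n * (\<Sum>t<m. p t * q t) + (c n)\<^sup>2 * (\<Sum>t<m. (q t)\<^sup>2)"
    unfolding split by (simp add: power2_sum power_mult_distrib sum.distrib sum_distrib_left mult_ac)
  also have "\<dots> \<ge> (c n)\<^sup>2 * (\<Sum>t<m. (q t)\<^sup>2)" using pq by (simp add: sum_nonneg)
  finally have "(c n)\<^sup>2 * (\<Sum>t<m. (q t)\<^sup>2) \<le> (\<Sum>t<m. (\<Sum>i<Suc n. c i * u i t)\<^sup>2)" .
  from mult_left_mono[OF this, of "gram m u n"] gpos
  show ?thesis using G by (simp add: q_def mult_ac)
qed

section \<open>The point of pi_d orthogonal to d-1 basis vectors\<close>

lemma abs_det_eq_1_if_spans:
  fixes v :: "nat \<Rightarrow> nat \<Rightarrow> int"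
  assumes span: "\<forall>w\<in>ivecs d. \<exists>c::nat\<Rightarrow>int. \<forall>i<d. w i = (\<Sum>j<d. c j * v j i)"
  shows "\<bar>det (mat d d (\<lambda>(i,j). v i j))\<bar> = 1"
proof -
  define V where "V = mat d d (\<lambda>(i,j). v i j)"
  have "\<exists>c::nat\<Rightarrow>int. \<forall>i<d. (if i = r then 1 else 0) = (\<Sum>j<d. c j * v j i)" if "r < d" for r
  proof -
    have "(\<lambda>i. if i = r then 1 else 0::int) \<in> ivecs d" using that by (auto simp: ivecs_def)
    then show ?thesis using span by fastforce
  qed
  then obtain C where C: "\<And>r i. r < d \<Longrightarrow> i < d \<Longrightarrow> (if i = r then 1 else 0) = (\<Sum>j<d. C r j * v j i)"
    by metis
  define CM where "CM = mat d d (\<lambda>(r,j). C r j)"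
  have "CM * V = 1\<^sub>m d"
  proof (rule eq_matI)
    fix r i assume "r < dim_row (1\<^sub>m d)" "i < dim_col (1\<^sub>m d)"
    then have ri: "r < d" "i < d" by auto
    have "(CM * V) $$ (r, i) = (\<Sum>j<d. C r j * v j i)"
      using ri by (simp add: CM_def V_def scalar_prod_def lessThan_atLeast0)
    then show "(CM * V) $$ (r, i) = 1\<^sub>m d $$ (r, i)" using C[OF ri] ri by auto
  qed (auto simp: CM_def V_def)
  then have "det CM * det V = 1"
    by (metis CM_def V_def det_mult det_one mat_carrier)
  then show ?thesis unfolding V_def[symmetric] using zmult_eq_1_iff by auto
qed

lemma gram_eq_det_sq:
  fixes v :: "nat \<Rightarrow> nat \<Rightarrow> int"
  shows "gram n (\<lambda>i t. real_of_int (v i t)) n = (det (mat n n (\<lambda>(i,j). real_of_int (v i j))))\<^sup>2"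
proof -
  define M where "M = mat n n (\<lambda>(i,j). real_of_int (v i j))"
  have "mat n n (\<lambda>(i,j). \<Sum>t<n. real_of_int (v i t) * real_of_int (v j t)) = M * transpose_mat M"
    by (rule eq_matI) (auto simp: M_def scalar_prod_def lessThan_atLeast0)
  moreover have "det (M * transpose_mat M) = det M * det M"
    by (metis M_def det_mult det_transpose mat_carrier transpose_carrier_mat)
  ultimately show ?thesis by (simp add: gram_def M_def power2_eq_square)
qed

lemma pi_d_orthogonal_unique:
  fixes v :: "nat \<Rightarrow> nat \<Rightarrow> int"
  assumes dn: "d = Suc n" and detM: "det (mat n n (\<lambda>(i,j). real_of_int (v i j))) \<noteq> 0"
    and a: "a \<in> pi_d d" "\<forall>j<n. Lf d a (v j) = 0"
    and b: "b \<in> pi_d d" "\<forall>j<n. Lf d b (v j) = 0"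
  shows "a = b"
proof -
  define M where "M = mat n n (\<lambda>(i,j). real_of_int (v i j))"
  define x where "x = vec n (\<lambda>t. a t - b t)"
  have an: "a n = 1" "b n = 1" using a(1) b(1) dn by (auto simp: pi_d_def)
  have "M *\<^sub>v x = 0\<^sub>v n"
  proof (rule eq_vecI)
    fix i assume "i < dim_vec (0\<^sub>v n)"
    then have i: "i < n" by simp
    have "Lf d a (v i) - Lf d b (v i) = (\<Sum>t<n. real_of_int (v i t) * (a t - b t))"
      using an by (simp add: Lf_def dn sum_subtractf[symmetric] algebra_simps)
    then show "(M *\<^sub>v x) $ i = 0\<^sub>v n $ i"
      using i a(2) b(2) by (simp add: M_def x_def scalar_prod_def lessThan_atLeast0)
  qed (simp add: M_def)
  moreover have "x \<in> carrier_vec n" by (simp add: x_def)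
  ultimately have "x = 0\<^sub>v n"
    using det_0_iff_vec_prod_zero_field[of M n] detM by (auto simp: M_def)
  then have low: "a t = b t" if "t < n" for t
    using that by (metis x_def index_vec index_zero_vec(1) eq_iff_diff_eq_0)
  have high: "a t = b t" if "t \<ge> n" for t
    using that an a(1) b(1) dn by (cases "t = n") (auto simp: pi_d_def rvecs_def)
  show "a = b"
  proof
    fix t show "a t = b t" using low high by (cases "t < n") auto
  qed
qed

text \<open>Cramer's rule: the cofactors along the last row of the basis matrix are orthogonal to
  the other rows; normalising the last coordinate to 1 gives the point of pi_d.\<close>
lemma pi_d_orthogonal_point:
  fixes v :: "nat \<Rightarrow> nat \<Rightarrow> int"
  assumes hd: "d \<ge> 2"
    and span: "\<forall>w\<in>ivecs d. \<exists>c::nat\<Rightarrow>int. \<forall>i<d. w i = (\<Sum>j<d. c j * v j i)"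
    and indep: "lin_indep (d-1) (\<lambda>i t. real_of_int (v i t)) (d-1)"
  shows "\<exists>!a. a \<in> pi_d d \<and> (\<forall>j<d-1. Lf d a (v j) = 0)"
    and "\<And>a. a \<in> pi_d d \<Longrightarrow> \<forall>j<d-1. Lf d a (v j) = 0 \<Longrightarrow>
          \<bar>Lf d a (v (d-1))\<bar> * sqrt (gram (d-1) (\<lambda>i t. real_of_int (v i t)) (d-1)) = 1"
proof -
  obtain n where dn: "d = Suc n" using hd by (cases d) auto
  define Vr where "Vr = mat d d (\<lambda>(i,j). real_of_int (v i j))"
  define M where "M = mat n n (\<lambda>(i,j). real_of_int (v i j))"
  have Vr_carr: "Vr \<in> carrier_mat d d" by (simp add: Vr_def)
  have "Vr = of_int_hom.mat_hom (mat d d (\<lambda>(i,j). v i j))"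
    by (rule eq_matI) (auto simp: Vr_def)
  then have detV: "\<bar>det Vr\<bar> = 1"
    using abs_det_eq_1_if_spans[OF span] by (metis of_int_abs of_int_hom.hom_det of_int_1)
  have gramM: "gram (d-1) (\<lambda>i t. real_of_int (v i t)) (d-1) = (det M)\<^sup>2"
    using gram_eq_det_sq[of n v] dn by (simp add: M_def)
  have detM: "det M \<noteq> 0"
    using gram_nonzero[OF indep] gramM by simp
  have cofnn: "cofactor Vr n n = det M"
  proof -
    have "mat_delete Vr n n = M"
      by (rule eq_matI) (auto simp: mat_delete_def Vr_def M_def dn)
    then show ?thesis by (simp add: cofactor_def)
  qed
  have cof: "(\<Sum>t<d. real_of_int (v i t) * cofactor Vr n t) = (if i = n then det Vr else 0)"
    if i: "i < d" for i
  proof -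
    have "(Vr * adj_mat Vr) $$ (i, n) = (det Vr \<cdot>\<^sub>m 1\<^sub>m d) $$ (i, n)"
      using adj_mat[OF Vr_carr] by simp
    then show ?thesis
      using i dn by (simp add: Vr_def adj_mat_def scalar_prod_def lessThan_atLeast0)
  qed
  define a where "a t = (if t < d then cofactor Vr n t / det M else 0)" for t
  have a_pi: "a \<in> pi_d d"
    using detM cofnn dn by (simp add: pi_d_def rvecs_def a_def)
  have aL: "Lf d a (v i) = (if i = n then det Vr / det M else 0)" if "i < d" for i
  proof -
    have "Lf d a (v i) = (\<Sum>t<d. real_of_int (v i t) * cofactor Vr n t) / det M"
      by (simp add: Lf_def a_def sum_divide_distrib mult.commute)
    then show ?thesis using cof[OF that] by simp
  qed
  have uniq: "b = a" if "b \<in> pi_d d" "\<forall>j<d-1. Lf d b (v j) = 0" for b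
    using pi_d_orthogonal_unique[OF dn detM[unfolded M_def]] that a_pi aL dn by simp
  show "\<exists>!a. a \<in> pi_d d \<and> (\<forall>j<d-1. Lf d a (v j) = 0)"
  proof (rule ex1I[of _ a])
    show "a \<in> pi_d d \<and> (\<forall>j<d-1. Lf d a (v j) = 0)" using a_pi aL dn by simp
  qed (use uniq in blast)
  fix a' assume "a' \<in> pi_d d" "\<forall>j<d-1. Lf d a' (v j) = 0"
  then have "a' = a" using uniq by blast
  then show "\<bar>Lf d a' (v (d-1))\<bar> * sqrt (gram (d-1) (\<lambda>i t. real_of_int (v i t)) (d-1)) = 1"
    using aL[of n] dn detV detM gramM by (simp add: abs_divide)
qed

lemma ul_indep_iff_lin_indep:
  "ul_indep d z k \<longleftrightarrow> lin_indep (d-1) (\<lambda>i t. real_of_int (z (k+i) t)) (d-1)"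
  by (simp add: ul_indep_def lin_indep_def)

lemma detL_eq_sqrt_gram: "detL d z k l = sqrt (gram (d-1) (\<lambda>i t. real_of_int (z (k+i) t)) l)"
  by (simp add: detL_def gram_def ulinner_def)

lemma alphaq_orthogonal:
  fixes z :: "nat \<Rightarrow> nat \<Rightarrow> int" and v :: "nat \<Rightarrow> int"
  assumes hd: "d \<ge> 2" and indep: "ul_indep d z j"
    and span: "\<forall>w\<in>ivecs d. \<exists>c::nat\<Rightarrow>int. \<exists>c0::int.
                 \<forall>i<d. w i = (\<Sum>l<d-1. c l * z (j+l) i) + c0 * v i"
  shows "alphaq d z j \<in> pi_d d"
    and "\<And>l. l < d-1 \<Longrightarrow> Lf d (alphaq d z j) (z (j+l)) = 0"
    and "\<bar>Lf d (alphaq d z j) v\<bar> * detL d z j (d-1) = 1"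
proof -
  obtain n where dn: "d = Suc n" using hd by (cases d) auto
  define v' where "v' l = (if l < n then z (j+l) else v)" for l
  have span': "\<forall>w\<in>ivecs d. \<exists>c::nat\<Rightarrow>int. \<forall>i<d. w i = (\<Sum>l<d. c l * v' l i)"
  proof
    fix w assume "w \<in> ivecs d"
    then obtain c c0 where c: "\<forall>i<d. w i = (\<Sum>l<d-1. c l * z (j+l) i) + c0 * v i"
      using span by blast
    define c' where "c' l = (if l < n then c l else c0)" for l
    have "\<forall>i<d. w i = (\<Sum>l<d. c' l * v' l i)"
      using c by (simp add: dn c'_def v'_def)
    then show "\<exists>c::nat\<Rightarrow>int. \<forall>i<d. w i = (\<Sum>l<d. c l * v' l i)" by blast
  qed
  have indep': "lin_indep (d-1) (\<lambda>i t. real_of_int (v' i t)) (d-1)"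
    using indep by (simp add: ul_indep_def lin_indep_def dn v'_def)
  have orth_iff: "(\<forall>l<d-1. Lf d a (v' l) = 0) \<longleftrightarrow> (\<forall>l<d-1. Lf d a (z (j+l)) = 0)" for a
    by (simp add: dn v'_def)
  have gram_eq: "gram (d-1) (\<lambda>i t. real_of_int (v' i t)) (d-1) = gram (d-1) (\<lambda>i t. real_of_int (z (j+i) t)) (d-1)"
    by (rule gram_cong) (simp add: dn v'_def)
  note P = pi_d_orthogonal_point[OF hd span' indep']
  have A: "alphaq d z j \<in> pi_d d \<and> (\<forall>l<d-1. Lf d (alphaq d z j) (z (j+l)) = 0)"
    unfolding alphaq_def orth_iff[symmetric] by (rule theI'[OF P(1)])
  then show "alphaq d z j \<in> pi_d d" "\<And>l. l < d-1 \<Longrightarrow> Lf d (alphaq d z j) (z (j+l)) = 0"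
    by auto
  have "v' (d-1) = v" by (simp add: dn v'_def)
  then show "\<bar>Lf d (alphaq d z j) v\<bar> * detL d z j (d-1) = 1"
    using P(2)[of "alphaq d z j"] A orth_iff gram_eq by (simp add: detL_eq_sqrt_gram)
qed

lemma is_Zbasis_coeffs:
  assumes "is_Zbasis d z k" and "w \<in> ivecs d"
  obtains c :: "nat \<Rightarrow> int" where "\<forall>i<d. w i = (\<Sum>j=1..d. c j * z (k+j) i)"
proof -
  have "\<exists>!c. (\<forall>j. j \<notin> {1..d} \<longrightarrow> c j = 0) \<and> (\<forall>i<d. w i = (\<Sum>j=1..d. c j * z (k+j) i))"
    using assms unfolding is_Zbasis_def by blast
  then show ?thesis using that by (elim ex1E) blast
qed

lemma is_Zbasis_span_first:
  assumes "is_Zbasis d z k" and "d \<ge> 1"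
  shows "\<forall>w\<in>ivecs d. \<exists>c::nat\<Rightarrow>int. \<exists>c0::int.
           \<forall>i<d. w i = (\<Sum>l<d-1. c l * z (k+1+l) i) + c0 * z (k+d) i"
proof
  fix w assume "w \<in> ivecs d"
  then obtain c where c: "\<forall>i<d. w i = (\<Sum>j=1..d. c j * z (k+j) i)"
    using is_Zbasis_coeffs[OF assms(1)] by blast
  obtain n where dn: "d = Suc n" using assms(2) by (cases d) auto
  have "\<forall>i<d. w i = (\<Sum>l<d-1. c (Suc l) * z (k+1+l) i) + c d * z (k+d) i"
    using c unfolding dn sum.atLeast1_atMost_eq[folded One_nat_def] by simp
  then show "\<exists>c::nat\<Rightarrow>int. \<exists>c0::int. \<forall>i<d. w i = (\<Sum>l<d-1. c l * z (k+1+l) i) + c0 * z (k+d) i"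
    by (intro exI[of _ "\<lambda>l. c (Suc l)"] exI[of _ "c d"])
qed

lemma is_Zbasis_span_second:
  assumes "is_Zbasis d z k" and "d \<ge> 1"
  shows "\<forall>w\<in>ivecs d. \<exists>c::nat\<Rightarrow>int. \<exists>c0::int.
           \<forall>i<d. w i = (\<Sum>l<d-1. c l * z (k+2+l) i) + c0 * z (k+1) i"
proof
  fix w assume "w \<in> ivecs d"
  then obtain c where c: "\<forall>i<d. w i = (\<Sum>j=1..d. c j * z (k+j) i)"
    using is_Zbasis_coeffs[OF assms(1)] by blast
  obtain n where dn: "d = Suc n" using assms(2) by (cases d) auto
  have "\<forall>i<d. w i = (\<Sum>l<d-1. c (Suc (Suc l)) * z (k+2+l) i) + c 1 * z (k+1) i"
    using c unfolding dn sum.atLeast1_atMost_eq[folded One_nat_def] sum.lessThan_Suc_shift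
    by (simp add: add_ac)
  then show "\<exists>c::nat\<Rightarrow>int. \<exists>c0::int. \<forall>i<d. w i = (\<Sum>l<d-1. c l * z (k+2+l) i) + c0 * z (k+1) i"
    by (intro exI[of _ "\<lambda>l. c (Suc (Suc l))"] exI[of _ "c 1"])
qed

section \<open>Linear forms on pi_d\<close>

lemma rnorm_nonneg: "rnorm d x \<ge> 0"
  by (simp add: rnorm_def sum_nonneg)

lemma ulnorm_nonneg: "ulnorm d w \<ge> 0"
  by (simp add: ulnorm_def sum_nonneg)

lemma ulnorm_sq: "(ulnorm d w)\<^sup>2 = (\<Sum>i<d-1. (real_of_int (w i))\<^sup>2)"
  by (simp add: ulnorm_def sum_nonneg)

lemma rnorm_scale: "rnorm d (\<lambda>i. t * x i) = \<bar>t\<bar> * rnorm d x"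
proof -
  have "(\<Sum>i<d. (t * x i)\<^sup>2) = t\<^sup>2 * (\<Sum>i<d. (x i)\<^sup>2)"
    by (simp add: power_mult_distrib sum_distrib_left)
  then show ?thesis by (simp add: rnorm_def real_sqrt_mult)
qed

text \<open>A point at distance exactly R from the centre is not interior: moving it radially
  outwards within pi_d leaves the ball.\<close>
lemma rel_int_pi_cball_dist_less:
  assumes c: "c \<in> pi_d d" and R: "R > 0"
    and x: "x \<in> rel_int_pi d {y \<in> pi_d d. rnorm d (\<lambda>i. y i - c i) \<le> R}"
  shows "rnorm d (\<lambda>i. x i - c i) < R"
proof (rule ccontr)
  assume nlt: "\<not> rnorm d (\<lambda>i. x i - c i) < R"
  define \<rho> where "\<rho> = rnorm d (\<lambda>i. x i - c i)"
  from x obtain e where e: "e > 0" and xin: "x \<in> pi_d d" "\<rho> \<le> R"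
    and ball: "\<forall>y\<in>pi_d d. rnorm d (\<lambda>i. y i - x i) < e \<longrightarrow> rnorm d (\<lambda>i. y i - c i) \<le> R"
    unfolding rel_int_pi_def \<rho>_def by auto
  have rhoR: "\<rho> = R" using nlt xin unfolding \<rho>_def by simp
  define s where "s = e / (2 * \<rho>)"
  have s: "s > 0" using e R rhoR by (simp add: s_def)
  define y where "y i = x i + s * (x i - c i)" for i
  have "y \<in> pi_d d" using xin(1) c by (simp add: y_def pi_d_def rvecs_def)
  moreover have "rnorm d (\<lambda>i. y i - x i) < e"
    using rnorm_scale[of d s "\<lambda>i. x i - c i"] s e R rhoR by (simp add: y_def \<rho>_def s_def)
  ultimately have "rnorm d (\<lambda>i. y i - c i) \<le> R" using ball by blast
  moreover have "rnorm d (\<lambda>i. y i - c i) = (1 + s) * \<rho>"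
    using rnorm_scale[of d "1 + s" "\<lambda>i. x i - c i"] s
    by (simp add: y_def \<rho>_def algebra_simps)
  ultimately show False using rhoR mult_pos_pos[OF R s] by (simp add: algebra_simps)
qed

lemma Lf_diff_le:
  assumes "d \<ge> 1" and a: "a \<in> pi_d d" and b: "b \<in> pi_d d"
  shows "\<bar>Lf d a w - Lf d b w\<bar> \<le> rnorm d (\<lambda>i. a i - b i) * ulnorm d w"
proof -
  obtain n where dn: "d = Suc n" using assms(1) by (cases d) auto
  have an: "a n = 1" "b n = 1" using a b dn by (auto simp: pi_d_def)
  have "\<bar>Lf d a w - Lf d b w\<bar> = \<bar>\<Sum>i<n. (a i - b i) * real_of_int (w i)\<bar>"
    using an by (simp add: Lf_def dn sum_subtractf[symmetric] left_diff_distrib)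
  also have "\<dots> = sqrt ((\<Sum>i<n. (a i - b i) * real_of_int (w i))\<^sup>2)" by simp
  also have "\<dots> \<le> sqrt ((\<Sum>i<n. (a i - b i)\<^sup>2) * (\<Sum>i<n. (real_of_int (w i))\<^sup>2))"
    by (rule real_sqrt_le_mono[OF Cauchy_Schwarz_ineq_sum])
  also have "\<dots> = rnorm d (\<lambda>i. a i - b i) * ulnorm d w"
    using an by (simp add: rnorm_def ulnorm_def dn real_sqrt_mult)
  finally show ?thesis .
qed

lemma Lf_sum:
  assumes "\<forall>i<d. w i = (\<Sum>j\<in>J. c j * v j i)"
  shows "Lf d a w = (\<Sum>j\<in>J. real_of_int (c j) * Lf d a (v j))"
proof -
  have "Lf d a w = (\<Sum>i<d. \<Sum>j\<in>J. a i * (real_of_int (c j) * real_of_int (v j i)))"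
    unfolding Lf_def using assms by (intro sum.cong) (auto simp: sum_distrib_left)
  also have "\<dots> = (\<Sum>j\<in>J. \<Sum>i<d. a i * (real_of_int (c j) * real_of_int (v j i)))"
    by (rule sum.swap)
  also have "\<dots> = (\<Sum>j\<in>J. real_of_int (c j) * Lf d a (v j))"
    by (simp add: Lf_def sum_distrib_left mult_ac)
  finally show ?thesis .
qed

lemma Lf_lincomb2:
  "Lf d a (\<lambda>i. x * f i + y * g i) = real_of_int x * Lf d a f + real_of_int y * Lf d a g"
  by (simp add: Lf_def sum.distrib sum_distrib_left algebra_simps)

lemma ulnorm_lincomb2_sq:
  "(ulnorm d (\<lambda>i. x * f i + y * g i))\<^sup>2 = (real_of_int x)\<^sup>2 * (ulnorm d f)\<^sup>2
     + 2 * real_of_int x * real_of_int y * ulinner d f g + (real_of_int y)\<^sup>2 * (ulnorm d g)\<^sup>2"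
proof -
  have "(ulnorm d (\<lambda>i. x * f i + y * g i))\<^sup>2 = (\<Sum>i<d-1. (real_of_int x)\<^sup>2 * (real_of_int (f i))\<^sup>2
      + 2 * real_of_int x * real_of_int y * (real_of_int (f i) * real_of_int (g i))
      + (real_of_int y)\<^sup>2 * (real_of_int (g i))\<^sup>2)"
    unfolding ulnorm_sq by (rule sum.cong) (simp_all add: power2_sum power_mult_distrib mult_ac)
  then show ?thesis
    by (simp add: sum.distrib sum_distrib_left ulinner_def ulnorm_sq)
qed

lemma gram_le_norm_mul_gram:
  fixes c :: "nat \<Rightarrow> int"
  assumes indep: "lin_indep m u (Suc n)" and "c n \<noteq> 0"
  shows "gram m u (Suc n) \<le> gram m u n * (\<Sum>t<m. (\<Sum>i<Suc n. real_of_int (c i) * u i t)\<^sup>2)"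
proof -
  have "1 \<le> (real_of_int (c n))\<^sup>2" using assms(2) by (simp add: power2_ge_1_iff) linarith
  then have "gram m u (Suc n) \<le> (real_of_int (c n))\<^sup>2 * gram m u (Suc n)"
    using gram_pos[OF indep, of "Suc n"] by (simp add: mult_le_cancel_right1)
  also have "\<dots> \<le> gram m u n * (\<Sum>t<m. (\<Sum>i<Suc n. real_of_int (c i) * u i t)\<^sup>2)"
    by (rule gram_coeff_bound[OF indep])
  finally show ?thesis .
qed

lemma detL_le_ulnorm_mul_detL:
  fixes c :: "nat \<Rightarrow> int"
  assumes indep: "ul_indep d z j" and "n < d - 1" and "c n \<noteq> 0"
    and w: "\<forall>t<d-1. w t = (\<Sum>i<Suc n. c i * z (j+i) t)"
  shows "detL d z j (Suc n) \<le> ulnorm d w * detL d z j n"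
proof -
  define u where "u i t = real_of_int (z (j+i) t)" for i t
  have "lin_indep (d-1) u (Suc n)"
    using lin_indep_mono indep assms(2) by (simp add: ul_indep_iff_lin_indep u_def[abs_def])
  then have "gram (d-1) u (Suc n) \<le> gram (d-1) u n * (ulnorm d w)\<^sup>2"
    using gram_le_norm_mul_gram[of "d-1" u n c] assms(3) w by (simp add: ulnorm_sq u_def)
  then have "sqrt (gram (d-1) u (Suc n)) \<le> sqrt (gram (d-1) u n * (ulnorm d w)\<^sup>2)"
    by (rule real_sqrt_le_mono)
  also have "\<dots> = ulnorm d w * sqrt (gram (d-1) u n)"
    using ulnorm_nonneg[of d w] by (simp add: real_sqrt_mult)
  finally show ?thesis by (simp add: detL_eq_sqrt_gram u_def[abs_def])
qed

section \<open>Short lattice vectors\<close>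

lemma short_vector_coeffs_vanish:
  fixes c :: "nat \<Rightarrow> int"
  assumes hdet: "\<forall>n. 3 \<le> n \<and> n \<le> d-1 \<longrightarrow>
                   detL d z (k+1) n > ulnorm d (z (k+2)) * detL d z (k+1) (n-1)"
    and indep: "ul_indep d z (k+1)"
    and w: "\<forall>i<d-1. w i = (\<Sum>j\<in>{1..d-1}. c j * z (k+j) i)"
    and short: "ulnorm d w \<le> ulnorm d (z (k+2))"
    and j: "3 \<le> j" "j \<le> d-1"
  shows "c j = 0"
proof (rule ccontr)
  assume "c j \<noteq> 0"
  define S where "S = {j. 3 \<le> j \<and> j \<le> d-1 \<and> c j \<noteq> 0}"
  have "j \<in> S" using j \<open>c j \<noteq> 0\<close> by (simp add: S_def)
  moreover have fin: "finite S" by (rule finite_subset[of _ "{..d-1}"]) (auto simp: S_def)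
  ultimately have "Max S \<in> S" by (intro Max_in) auto
  then obtain n where N: "Suc n \<in> S" and Nmax: "Max S = Suc n"
    by (cases "Max S") (auto simp: S_def)
  have nmax: "j \<le> Suc n" if "j \<in> S" for j
    using Max_ge[OF fin that] Nmax by simp
  have n: "2 \<le> n" "n < d - 1" "c (Suc n) \<noteq> 0" using N by (auto simp: S_def)
  have above: "c j = 0" if "Suc n < j" "j \<le> d-1" for j
    using nmax[of j] that n by (auto simp: S_def)
  have "\<forall>t<d-1. w t = (\<Sum>i<Suc n. c (Suc i) * z (k+1+i) t)"
  proof (intro allI impI)
    fix t assume "t < d-1"
    have split: "{1..d-1} = {1..Suc n} \<union> {Suc n<..d-1}" using n by auto
    have "w t = (\<Sum>j\<in>{1..d-1}. c j * z (k+j) t)" using w \<open>t < d-1\<close> by simp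
    also have "\<dots> = (\<Sum>j\<in>{1..Suc n} \<union> {Suc n<..d-1}. c j * z (k+j) t)"
      by (rule sum.cong[OF split refl])
    also have "\<dots> = (\<Sum>j\<in>{1..Suc n}. c j * z (k+j) t) + (\<Sum>j\<in>{Suc n<..d-1}. c j * z (k+j) t)"
      by (rule sum.union_disjoint) auto
    also have "(\<Sum>j\<in>{Suc n<..d-1}. c j * z (k+j) t) = 0"
      using above by simp
    finally show "w t = (\<Sum>i<Suc n. c (Suc i) * z (k+1+i) t)"
      by (simp add: sum.atLeast1_atMost_eq)
  qed
  then have "detL d z (k+1) (Suc n) \<le> ulnorm d w * detL d z (k+1) n"
    by (rule detL_le_ulnorm_mul_detL[where c = "\<lambda>i. c (Suc i)", OF indep n(2,3)])
  also have "\<dots> \<le> ulnorm d (z (k+2)) * detL d z (k+1) n"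
  proof (rule mult_right_mono[OF short])
    have "lin_indep (d-1) (\<lambda>i t. real_of_int (z (k+1+i) t)) (d-1)"
      using indep by (simp add: ul_indep_iff_lin_indep)
    from gram_pos[OF this, of n] n(2) show "0 \<le> detL d z (k+1) n"
      by (simp add: detL_eq_sqrt_gram)
  qed
  also have "\<dots> < detL d z (k+1) (Suc n)"
    using hdet[rule_format, of "Suc n"] n by simp
  finally show False by simp
qed

text \<open>The quadratic form is the squared length of x u + y v for vectors with |u| = n1 \<le> |v| = n2
  and inner product p \<le> 0; such a pair is reduced.\<close>
lemma obtuse_pair_short_combinations:
  fixes x y :: int and n1 n2 p :: real
  assumes n1: "0 < n1" "n1 \<le> n2" and p: "p \<le> 0" "- p < n1 * n2"
    and short: "(real_of_int x)\<^sup>2 * n1\<^sup>2 + 2 * real_of_int x * real_of_int y * p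
                + (real_of_int y)\<^sup>2 * n2\<^sup>2 \<le> n2\<^sup>2"
  shows "(x = 0 \<and> \<bar>y\<bar> \<le> 1) \<or> 2 \<le> \<bar>x\<bar> \<or> (\<bar>x\<bar> = 1 \<and> (y = 0 \<or> y = x))"
proof -
  have n2: "0 < n2" using n1 by simp
  have y2: "n2\<^sup>2 \<le> (real_of_int y)\<^sup>2 * n2\<^sup>2" if "y \<noteq> 0"
  proof -
    have "1 \<le> (real_of_int y)\<^sup>2" using that by (simp add: power2_ge_1_iff) linarith
    then show ?thesis by (simp add: mult_le_cancel_right1)
  qed
  consider "x = 0" | "2 \<le> \<bar>x\<bar>" | "x = 1 \<or> x = -1" by linarith
  then show ?thesis
  proof cases
    case 1
    then have "(real_of_int y)\<^sup>2 * n2\<^sup>2 \<le> 1 * n2\<^sup>2" using short by simp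
    then have "(real_of_int y)\<^sup>2 \<le> 1" using n2 by (simp only: mult_le_cancel_right) simp
    then have "\<bar>real_of_int y\<bar> \<le> 1" by (simp add: abs_square_le_1)
    then show ?thesis using 1 by linarith
  next
    case 3
    then have x2: "(real_of_int x)\<^sup>2 = 1" by auto
    have "x \<noteq> 0" using 3 by auto
    consider "y = 0" | "y = x" | "x * y < 0" | "0 < x * y" "y \<noteq> x"
      using \<open>x \<noteq> 0\<close> by (cases "x * y" "0::int" rule: linorder_cases) auto
    then show ?thesis
    proof cases
      case 3
      then have "real_of_int x * real_of_int y \<le> 0"
        by (simp flip: of_int_mult)
      then have "0 \<le> real_of_int x * real_of_int y * p" using p(1) by (rule mult_nonpos_nonpos)
      then have "0 \<le> 2 * real_of_int x * real_of_int y * p" by (simp add: mult.assoc)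
      moreover have "n2\<^sup>2 \<le> (real_of_int y)\<^sup>2 * n2\<^sup>2" using 3 by (intro y2) auto
      moreover have "n1\<^sup>2 + 2 * real_of_int x * real_of_int y * p + (real_of_int y)\<^sup>2 * n2\<^sup>2 \<le> n2\<^sup>2"
        using short x2 by simp
      ultimately have "n1\<^sup>2 \<le> 0" by linarith
      then show ?thesis using n1 by simp
    next
      case 4
      define Y where "Y = \<bar>real_of_int y\<bar>"
      have xy: "real_of_int x * real_of_int y = Y"
        using 4 \<open>x = 1 \<or> x = -1\<close> by (auto simp: Y_def zero_less_mult_iff)
      have "y \<noteq> 1" "y \<noteq> -1" "y \<noteq> 0" using 4 \<open>x = 1 \<or> x = -1\<close> by auto
      then have Y2: "2 \<le> Y" unfolding Y_def by linarith
      have "Y * (- p) < Y * (n1 * n2)" using p(2) Y2 by (intro mult_strict_left_mono) auto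
      then have "(Y * n2 - n1)\<^sup>2 < n1\<^sup>2 + 2 * Y * p + Y\<^sup>2 * n2\<^sup>2"
        by (simp add: power2_diff power_mult_distrib algebra_simps)
      also have "\<dots> \<le> n2\<^sup>2"
        using short x2 xy by (simp add: Y_def mult.assoc)
      finally have "(Y * n2 - n1)\<^sup>2 < n2\<^sup>2" .
      moreover have "2 * n2 \<le> Y * n2" using Y2 n2 by (simp add: mult_right_mono)
      then have "n2 \<le> Y * n2 - n1" using n1 by linarith
      then have "n2\<^sup>2 \<le> (Y * n2 - n1)\<^sup>2" using n2 by (simp add: power_mono)
      ultimately show ?thesis by simp
    qed (use 3 in auto)
  qed simp
qed

section \<open>Two adjacent balls\<close>

lemma pos_if_abs_mult_eq_1: "\<bar>a\<bar> * b = 1 \<Longrightarrow> (b::real) > 0"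
  by (smt (verit) abs_ge_zero mult_nonneg_nonpos)

locale adjacent_balls =
  fixes d k :: nat and z :: "nat \<Rightarrow> nat \<Rightarrow> int" and \<alpha> :: "nat \<Rightarrow> real"
  assumes d3: "d \<ge> 3"
    and z_ivecs: "\<forall>n. z n \<in> ivecs d"
    and basis: "is_Zbasis d z k"
    and le12: "ulnorm d (z (k+1)) \<le> ulnorm d (z (k+2))"
    and le23: "ulnorm d (z (k+2)) \<le> ulnorm d (z (k+3))"
    and obtuse: "ulinner d (z (k+1)) (z (k+2)) \<le> 0"
    and det_growth: "\<forall>n. 3 \<le> n \<and> n \<le> d-1 \<longrightarrow>
                       detL d z (k+1) n > ulnorm d (z (k+2)) * detL d z (k+1) (n-1)"
    and indep1: "ul_indep d z (k+1)"
    and indep2: "ul_indep d z (k+2)"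
    and \<alpha>_mem: "\<alpha> \<in> Sq d z (k+1) \<inter> rel_int_pi d (Sq d z (k+2))"
    and sign: "Lf d \<alpha> (z (k+2)) * Lf d (alphaq d z (k+2)) (z (k+1)) \<ge> 0"
begin

abbreviation "n1 \<equiv> ulnorm d (z (k+1))"
abbreviation "n2 \<equiv> ulnorm d (z (k+2))"
abbreviation "n3 \<equiv> ulnorm d (z (k+3))"
abbreviation "p \<equiv> ulinner d (z (k+1)) (z (k+2))"
abbreviation "h \<equiv> detL d z (k+1) 2"
abbreviation "g1 \<equiv> detL d z (k+1) (d-1)"
abbreviation "g2 \<equiv> detL d z (k+2) (d-1)"
abbreviation "a1 \<equiv> alphaq d z (k+1)"
abbreviation "a2 \<equiv> alphaq d z (k+2)"
abbreviation "e1 \<equiv> Lf d \<alpha> (z (k+1))"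
abbreviation "e2 \<equiv> Lf d \<alpha> (z (k+2))"
abbreviation "s0 \<equiv> Lf d a2 (z (k+1))"
abbreviation "\<rho>1 \<equiv> rnorm d (\<lambda>i. \<alpha> i - a1 i)"
abbreviation "\<rho>2 \<equiv> rnorm d (\<lambda>i. \<alpha> i - a2 i)"

lemma a1_pi: "a1 \<in> pi_d d"
  and a1_orth: "l < d-1 \<Longrightarrow> Lf d a1 (z (k+1+l)) = 0"
  and a1_last: "\<bar>Lf d a1 (z (k+d))\<bar> * g1 = 1"
  using alphaq_orthogonal[OF _ indep1 is_Zbasis_span_first[OF basis]] d3 by auto

lemma a2_pi: "a2 \<in> pi_d d"
  and a2_orth: "l < d-1 \<Longrightarrow> Lf d a2 (z (k+2+l)) = 0"
  and s0_g2: "\<bar>s0\<bar> * g2 = 1"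
  using alphaq_orthogonal[OF _ indep2 is_Zbasis_span_second[OF basis]] d3 by auto

lemma g1_pos: "g1 > 0"
  using a1_last by (rule pos_if_abs_mult_eq_1)

lemma g2_pos: "g2 > 0"
  using s0_g2 by (rule pos_if_abs_mult_eq_1)

lemma abs_s0: "\<bar>s0\<bar> = 1 / g2"
  using s0_g2 g2_pos by (simp add: field_simps)

lemma lin_indep1: "lin_indep (d-1) (\<lambda>i t. real_of_int (z (k+1+i) t)) (d-1)"
  using indep1 by (simp add: ul_indep_iff_lin_indep)

lemma n1_pos: "n1 > 0"
proof -
  have "0 < gram (d-1) (\<lambda>i t. real_of_int (z (k+1+i) t)) 1"
    using gram_pos[OF lin_indep1, of 1] d3 by simp
  then have "0 < n1\<^sup>2" unfolding gram_one by (simp add: ulnorm_sq)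
  then show ?thesis using ulnorm_nonneg[of d "z (k+1)"] by (simp add: zero_less_power2)
qed

lemma n2_pos: "n2 > 0"
  using n1_pos le12 by simp

lemma h_sq: "h\<^sup>2 = n1\<^sup>2 * n2\<^sup>2 - p\<^sup>2" and h_pos: "h > 0"
proof -
  have "0 < gram (d-1) (\<lambda>i t. real_of_int (z (k+1+i) t)) 2"
    using gram_pos[OF lin_indep1, of 2] d3 by simp
  moreover have "gram (d-1) (\<lambda>i t. real_of_int (z (k+1+i) t)) 2 = n1\<^sup>2 * n2\<^sup>2 - p\<^sup>2"
    by (simp add: gram_two ulnorm_sq ulinner_def)
  ultimately show "h\<^sup>2 = n1\<^sup>2 * n2\<^sup>2 - p\<^sup>2" "h > 0"
    by (simp_all add: detL_eq_sqrt_gram)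
qed

lemma p_gt: "- p < n1 * n2"
proof -
  have "0 < h\<^sup>2" using h_pos by simp
  then have "p\<^sup>2 < n1\<^sup>2 * n2\<^sup>2" using h_sq by linarith
  then have "(- p)\<^sup>2 < (n1 * n2)\<^sup>2" by (simp add: power_mult_distrib)
  then show ?thesis by (rule power_less_imp_less_base) (use n1_pos n2_pos in simp)
qed

lemma Lf_a1_close: "\<bar>Lf d \<alpha> w - Lf d a1 w\<bar> \<le> \<rho>1 * ulnorm d w"
  using Lf_diff_le[OF _ _ a1_pi] \<alpha>_mem d3 by (simp add: Sq_def)

lemma Lf_a2_close: "\<bar>Lf d \<alpha> w - Lf d a2 w\<bar> \<le> \<rho>2 * ulnorm d w"
  using Lf_diff_le[OF _ _ a2_pi] \<alpha>_mem d3 by (simp add: Sq_def)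

lemma \<rho>1_n2: "\<rho>1 * n2 \<le> 1 / (2 * g1)"
proof -
  have "\<rho>1 \<le> 1 / (2 * n2 * g1)" using \<alpha>_mem by (simp add: Sq_def Rq_def)
  then have "\<rho>1 * n2 \<le> 1 / (2 * n2 * g1) * n2" by (rule mult_right_mono) (use n2_pos in simp)
  also have "\<dots> = 1 / (2 * g1)" using n2_pos by simp
  finally show ?thesis .
qed

lemma \<rho>2_n2: "\<rho>2 * n2 < 1 / (2 * g2)"
proof -
  have "Rq d z (k+2) > 0" using n1_pos le12 le23 g2_pos by (simp add: Rq_def numeral_3_eq_3)
  then have "\<rho>2 < Rq d z (k+2)"
    using rel_int_pi_cball_dist_less[OF a2_pi] \<alpha>_mem by (simp add: Sq_def)
  then have "\<rho>2 < 1 / (2 * n3 * g2)" by (simp add: Rq_def numeral_3_eq_3)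
  then have "\<rho>2 * n3 < 1 / (2 * n3 * g2) * n3"
    by (rule mult_strict_right_mono) (use n2_pos le23 in simp)
  also have "\<dots> = 1 / (2 * g2)" using n2_pos le23 by simp
  finally have "\<rho>2 * n3 < 1 / (2 * g2)" .
  moreover have "\<rho>2 * n2 \<le> \<rho>2 * n3" using le23 by (simp add: mult_left_mono rnorm_nonneg)
  ultimately show ?thesis by simp
qed

lemma e1_small: "\<bar>e1\<bar> \<le> 1 / (2 * g1)"
proof -
  have "\<bar>e1\<bar> \<le> \<rho>1 * n1" using Lf_a1_close[of "z (k+1)"] a1_orth[of 0] d3 by simp
  also have "\<dots> \<le> \<rho>1 * n2" using le12 by (simp add: mult_left_mono rnorm_nonneg)
  finally show ?thesis using \<rho>1_n2 by simp
qed

lemma e1_near_s0: "\<bar>e1 - s0\<bar> < 1 / (2 * g2)"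
proof -
  have "\<bar>e1 - s0\<bar> \<le> \<rho>2 * n1" using Lf_a2_close[of "z (k+1)"] .
  also have "\<dots> \<le> \<rho>2 * n2" using le12 by (simp add: mult_left_mono rnorm_nonneg)
  finally show ?thesis using \<rho>2_n2 by simp
qed

lemma e2_small: "\<bar>e2\<bar> < 1 / (2 * g2)"
  using Lf_a2_close[of "z (k+2)"] a2_orth[of 0] d3 \<rho>2_n2 by simp

lemma e1_bounds: "1 / (2 * g2) < \<bar>e1\<bar>" "\<bar>e1\<bar> < 3 / (2 * g2)"
  using e1_near_s0 abs_s0 by linarith+

lemma e1_gt_e2: "\<bar>e2\<bar> < \<bar>e1\<bar>"
  using e1_bounds e2_small by simp

lemma e1_e2_same_sign: "0 \<le> e1 * e2"
proof -
  have "1 / (2 * g2) < 1 / g2" using g2_pos by (simp add: field_simps)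
  then have "\<bar>e1 - s0\<bar> < \<bar>s0\<bar>" using e1_near_s0 abs_s0 by linarith
  then have "0 < e1 * s0" by (smt (verit) mult_neg_neg mult_pos_pos)
  moreover have "0 \<le> e2 * s0" using sign by (simp add: mult.commute)
  ultimately have "0 \<le> (e1 * s0) * (e2 * s0)" by simp
  then have "0 \<le> (e1 * e2) * s0\<^sup>2" by (simp add: power2_eq_square mult_ac)
  moreover have "s0\<^sup>2 > 0" using \<open>0 < e1 * s0\<close> by (auto simp: zero_less_mult_iff)
  ultimately show ?thesis by (simp add: zero_le_mult_iff)
qed

lemma far_if_last_coeff_nonzero:
  fixes c :: "nat \<Rightarrow> int"
  assumes w: "\<forall>i<d. w i = (\<Sum>j=1..d. c j * z (k+j) i)" and cd: "c d \<noteq> 0"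
    and short: "ulnorm d w \<le> n2"
  shows "1 / (2 * g1) \<le> \<bar>Lf d \<alpha> w\<bar>"
proof -
  obtain m where dm: "d = Suc m" using d3 by (cases d) auto
  have "Lf d a1 w = (\<Sum>j=1..d. real_of_int (c j) * Lf d a1 (z (k+j)))"
    by (rule Lf_sum) (use w in simp)
  also have "\<dots> = (\<Sum>j=1..m. real_of_int (c j) * Lf d a1 (z (k+j))) + real_of_int (c d) * Lf d a1 (z (k+d))"
    by (simp add: dm)
  also have "(\<Sum>j=1..m. real_of_int (c j) * Lf d a1 (z (k+j))) = 0"
  proof (intro sum.neutral ballI)
    fix j assume "j \<in> {1..m}"
    then have "Lf d a1 (z (k+1+(j-1))) = 0" and "k+1+(j-1) = k+j"
      using a1_orth[of "j-1"] dm by auto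
    then show "real_of_int (c j) * Lf d a1 (z (k+j)) = 0" by simp
  qed
  finally have "\<bar>Lf d a1 w\<bar> = \<bar>real_of_int (c d)\<bar> * (1 / g1)"
    using a1_last g1_pos by (simp add: abs_mult field_simps)
  moreover have "1 \<le> \<bar>real_of_int (c d)\<bar>" using cd by linarith
  ultimately have "1 / g1 \<le> \<bar>Lf d a1 w\<bar>"
    using divide_right_mono[of 1 "\<bar>real_of_int (c d)\<bar>" g1] g1_pos by simp
  moreover have "\<bar>Lf d \<alpha> w - Lf d a1 w\<bar> \<le> 1 / (2 * g1)"
    using Lf_a1_close[of w] mult_left_mono[OF short rnorm_nonneg[of d "\<lambda>i. \<alpha> i - a1 i"]] \<rho>1_n2
    by linarith
  moreover have "1 / g1 - 1 / (2 * g1) = 1 / (2 * g1)" by (simp add: field_simps)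
  ultimately show ?thesis by linarith
qed

lemma in_plane_if_last_coeff_zero:
  fixes c :: "nat \<Rightarrow> int"
  assumes "w \<in> ivecs d" and w: "\<forall>i<d. w i = (\<Sum>j=1..d. c j * z (k+j) i)" and cd: "c d = 0"
    and short: "ulnorm d w \<le> n2"
  shows "w = (\<lambda>i. c 1 * z (k+1) i + c 2 * z (k+2) i)"
proof
  fix i
  obtain m where dm: "d = Suc m" using d3 by (cases d) auto
  have "c j = 0" if "3 \<le> j" "j \<le> d" for j
  proof (cases "j = d")
    case False
    have "\<forall>i<d-1. w i = (\<Sum>j\<in>{1..d-1}. c j * z (k+j) i)" using w cd by (simp add: dm)
    from short_vector_coeffs_vanish[OF det_growth indep1 this short] that False
    show ?thesis by simp
  qed (use cd in simp)
  then have high: "(\<Sum>j\<in>{3..d}. c j * z (k+j) i) = 0" by simp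
  have "{1..d} = {1, 2} \<union> {3..d}" using d3 by auto
  then have "(\<Sum>j=1..d. c j * z (k+j) i) = c 1 * z (k+1) i + c 2 * z (k+2) i"
    using high by (simp add: sum.union_disjoint)
  moreover have "w i = 0" "z n i = 0" if "d \<le> i" for n
    using that \<open>w \<in> ivecs d\<close> z_ivecs by (auto simp: ivecs_def)
  ultimately show "w i = c 1 * z (k+1) i + c 2 * z (k+2) i"
    using w by (cases "i < d") auto
qed

lemma short_vector_cases[consumes 2, case_names far plane]:
  assumes "w \<in> ivecs d" and "ulnorm d w \<le> n2"
  obtains (far) "1 / (2 * g1) \<le> \<bar>Lf d \<alpha> w\<bar>"
    | (plane) x y where "w = (\<lambda>i. x * z (k+1) i + y * z (k+2) i)"
proof -
  obtain c where "\<forall>i<d. w i = (\<Sum>j=1..d. c j * z (k+j) i)"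
    using is_Zbasis_coeffs[OF basis assms(1)] by blast
  then show ?thesis
    using far_if_last_coeff_nonzero in_plane_if_last_coeff_zero assms that by blast
qed

lemma plane_Lf: "Lf d \<alpha> (\<lambda>i. x * z (k+1) i + y * z (k+2) i) = real_of_int x * e1 + real_of_int y * e2"
  by (rule Lf_lincomb2)

lemma plane_ulnorm_sq: "(ulnorm d (\<lambda>i. x * z (k+1) i + y * z (k+2) i))\<^sup>2
    = (real_of_int x)\<^sup>2 * n1\<^sup>2 + 2 * real_of_int x * real_of_int y * p + (real_of_int y)\<^sup>2 * n2\<^sup>2"
  by (rule ulnorm_lincomb2_sq)

text \<open>The centre a2 vanishes on z (k+2), so on the plane L at a2 only sees the coefficient x.\<close>
lemma plane_Lf_lower:
  assumes short: "ulnorm d (\<lambda>i. x * z (k+1) i + y * z (k+2) i) \<le> n2"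
  shows "(\<bar>real_of_int x\<bar> - 1 / 2) / g2 < \<bar>Lf d \<alpha> (\<lambda>i. x * z (k+1) i + y * z (k+2) i)\<bar>"
proof -
  let ?w = "\<lambda>i. x * z (k+1) i + y * z (k+2) i"
  have "Lf d a2 ?w = real_of_int x * s0"
    using Lf_lincomb2[of d a2 x "z (k+1)" y "z (k+2)"] a2_orth[of 0] d3 by simp
  then have "\<bar>Lf d \<alpha> ?w - real_of_int x * s0\<bar> \<le> \<rho>2 * n2"
    using Lf_a2_close[of ?w] mult_left_mono[OF short rnorm_nonneg[of d "\<lambda>i. \<alpha> i - a2 i"]] by linarith
  moreover have "\<bar>real_of_int x * s0\<bar> = \<bar>real_of_int x\<bar> / g2"
    using abs_s0 by (simp add: abs_mult)
  moreover have "(\<bar>real_of_int x\<bar> - 1 / 2) / g2 = \<bar>real_of_int x\<bar> / g2 - 1 / (2 * g2)"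
    using g2_pos by (simp add: field_simps)
  ultimately show ?thesis using \<rho>2_n2 by linarith
qed

lemma plane_ulnorm_lower:
  assumes "y \<noteq> 0"
  shows "h / n1 \<le> ulnorm d (\<lambda>i. x * z (k+1) i + y * z (k+2) i)"
proof -
  let ?W = "ulnorm d (\<lambda>i. x * z (k+1) i + y * z (k+2) i)"
  have "n1\<^sup>2 * ?W\<^sup>2 - (real_of_int y)\<^sup>2 * h\<^sup>2 = (real_of_int x * n1\<^sup>2 + real_of_int y * p)\<^sup>2"
    unfolding plane_ulnorm_sq h_sq by (simp add: power2_eq_square algebra_simps)
  moreover have "1 \<le> (real_of_int y)\<^sup>2" using assms by (simp add: power2_ge_1_iff) linarith
  then have "h\<^sup>2 \<le> (real_of_int y)\<^sup>2 * h\<^sup>2" by (simp add: mult_le_cancel_right1)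
  ultimately have "h\<^sup>2 \<le> (n1 * ?W)\<^sup>2" by (simp add: power_mult_distrib) (smt (verit) zero_le_power2)
  then have "h \<le> n1 * ?W" by (rule power2_le_imp_le) (use n1_pos ulnorm_nonneg in simp)
  then show ?thesis using n1_pos by (simp add: divide_le_eq mult.commute)
qed

lemma short_plane_cases[consumes 1, case_names x_zero x_large x_unit]:
  assumes "ulnorm d (\<lambda>i. x * z (k+1) i + y * z (k+2) i) \<le> n2"
  obtains "x = 0" "\<bar>y\<bar> \<le> 1" | "2 \<le> \<bar>x\<bar>" | "\<bar>x\<bar> = 1" "y = 0 \<or> y = x"
proof -
  have "(ulnorm d (\<lambda>i. x * z (k+1) i + y * z (k+2) i))\<^sup>2 \<le> n2\<^sup>2"
    using assms ulnorm_nonneg by (simp add: power_mono)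
  then show ?thesis
    using obtuse_pair_short_combinations[OF n1_pos le12 obtuse p_gt] that
    unfolding plane_ulnorm_sq by blast
qed

lemma Lf_z1_minimal:
  assumes "w \<in> ivecs d" "ulnorm d w \<le> n2"
    and "w \<noteq> (\<lambda>i. 0)" "w \<noteq> z (k+2)" "w \<noteq> (\<lambda>i. - z (k+2) i)"
  shows "\<bar>e1\<bar> \<le> \<bar>Lf d \<alpha> w\<bar>"
  using assms(1,2)
proof (cases rule: short_vector_cases)
  case far
  then show ?thesis using e1_small by simp
next
  case (plane x y)
  have "ulnorm d (\<lambda>i. x * z (k+1) i + y * z (k+2) i) \<le> n2" using plane assms(2) by simp
  then show ?thesis
  proof (cases rule: short_plane_cases)
    case x_zero
    then have "y = -1 \<or> y = 0 \<or> y = 1" by linarith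
    then show ?thesis using x_zero plane assms(3-5) by (auto simp: fun_eq_iff)
  next
    case x_large
    then have "3 / (2 * g2) \<le> (\<bar>real_of_int x\<bar> - 1 / 2) / g2"
      using g2_pos by (simp add: field_simps)
    then show ?thesis using plane_Lf_lower[of x y] plane assms(2) e1_bounds(2) by simp
  next
    case x_unit
    have abs_x: "\<bar>real_of_int x\<bar> = 1" using x_unit(1) by (simp flip: of_int_abs)
    from x_unit consider "y = 0" | "y = x" by blast
    then show ?thesis
    proof cases
      case 1
      then show ?thesis using plane plane_Lf[of x y] abs_x by (simp add: abs_mult)
    next
      case 2
      have "\<bar>e1\<bar> \<le> \<bar>e1 + e2\<bar>" using e1_e2_same_sign by (auto simp: zero_le_mult_iff abs_if)
      moreover have "Lf d \<alpha> w = real_of_int x * (e1 + e2)"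
        using plane plane_Lf[of x y] 2 by (simp add: algebra_simps)
      ultimately show ?thesis using abs_x by (simp add: abs_mult)
    qed
  qed
qed

lemma Lf_lower_bound:
  assumes "w \<in> ivecs d" "\<not> (\<exists>t::int. w = (\<lambda>i. t * z (k+1) i))"
    and "w \<noteq> z (k+2)" "w \<noteq> (\<lambda>i. - z (k+2) i)"
    and "n1 \<le> ulnorm d w" "ulnorm d w \<le> n2"
  shows "min (n1 ^ (d-1) / (2 * g1)) ((h / n1) ^ (d-1) / (2 * g2)) \<le> \<bar>Lf d \<alpha> w\<bar> * ulnorm d w ^ (d-1)"
  using assms(1,6)
proof (cases rule: short_vector_cases)
  case far
  have "n1 ^ (d-1) \<le> ulnorm d w ^ (d-1)" using assms(5) n1_pos by (simp add: power_mono)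
  then have "1 / (2 * g1) * n1 ^ (d-1) \<le> \<bar>Lf d \<alpha> w\<bar> * ulnorm d w ^ (d-1)"
    using far g1_pos n1_pos by (intro mult_mono) auto
  then show ?thesis by (simp add: min_le_iff_disj)
next
  case (plane x y)
  have "y \<noteq> 0" using plane assms(2) by auto
  have "x \<noteq> 0"
  proof
    assume "x = 0"
    have "ulnorm d (\<lambda>i. x * z (k+1) i + y * z (k+2) i) \<le> n2" using plane assms(6) by simp
    then have "\<bar>y\<bar> \<le> 1" using \<open>x = 0\<close> by (cases rule: short_plane_cases) auto
    then have "y = 1 \<or> y = -1" using \<open>y \<noteq> 0\<close> by linarith
    then show False using \<open>x = 0\<close> plane assms(3,4) by (auto simp: fun_eq_iff)
  qed
  then have "1 \<le> \<bar>real_of_int x\<bar>" by linarith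
  then have "1 / (2 * g2) \<le> (\<bar>real_of_int x\<bar> - 1 / 2) / g2" using g2_pos by (simp add: field_simps)
  also have "\<dots> < \<bar>Lf d \<alpha> w\<bar>" using plane_Lf_lower[of x y] plane assms(6) by simp
  finally have "1 / (2 * g2) < \<bar>Lf d \<alpha> w\<bar>" .
  moreover have "(h / n1) ^ (d-1) \<le> ulnorm d w ^ (d-1)"
    using plane_ulnorm_lower[OF \<open>y \<noteq> 0\<close>] plane h_pos n1_pos by (simp add: power_mono)
  ultimately have "1 / (2 * g2) * (h / n1) ^ (d-1) \<le> \<bar>Lf d \<alpha> w\<bar> * ulnorm d w ^ (d-1)"
    using g2_pos h_pos n1_pos by (intro mult_mono) auto
  then show ?thesis by (simp add: min_le_iff_disj)
qed

lemma Dq_Bq_eq: "c / (2 * Dq d z (k+2) (d-1) * Bq d z (k+1) ^ (d-1)) = c * n1 ^ (d-1) / (2 * g2)"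
  using n1_pos n2_pos g2_pos by (simp add: Dq_def Bq_def power_divide field_simps)

lemma Dq1_eq: "1 / (2 * Dq d z (k+1) (d-1)) = n1 ^ (d-1) / (2 * g1)"
  using n1_pos g1_pos by (simp add: Dq_def field_simps)

lemma Dq12_eq: "Dq d z (k+1) 2 ^ (d-1) / (2 * Dq d z (k+2) (d-1) * Bq d z (k+1) ^ (d-1))
    = (h / n1) ^ (d-1) / (2 * g2)"
  unfolding Dq_Bq_eq using n1_pos by (simp add: Dq_def power2_eq_square flip: power_mult_distrib)

end

theorem lemma4:
  fixes d k :: nat and z :: "nat \<Rightarrow> nat \<Rightarrow> int" and \<alpha> :: "nat \<Rightarrow> real"
  assumes hd: "d \<ge> 3"
    and hz: "\<forall>n. z n \<in> ivecs d"
    and hbasis: "is_Zbasis d z k"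
    and hle12: "ulnorm d (z (k+1)) \<le> ulnorm d (z (k+2))"
    and hle23: "ulnorm d (z (k+2)) \<le> ulnorm d (z (k+3))"
    and hinner: "ulinner d (z (k+1)) (z (k+2)) \<le> 0"
    and hdet: "\<forall>n. 3 \<le> n \<and> n \<le> d-1 \<longrightarrow>
                 detL d z (k+1) n > ulnorm d (z (k+2)) * detL d z (k+1) (n-1)"
    and hwd1: "ul_indep d z (k+1)"
    and hwd2: "ul_indep d z (k+2)"
    and h\<alpha>: "\<alpha> \<in> Sq d z (k+1) \<inter> rel_int_pi d (Sq d z (k+2))"
    and hsign: "Lf d \<alpha> (z (k+2)) * Lf d (alphaq d z (k+2)) (z (k+1)) \<ge> 0"
  shows "(\<forall>w\<in>ivecs d. ulnorm d w \<le> ulnorm d (z (k+2)) \<and> w \<noteq> (\<lambda>i. 0) \<and>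
            w \<noteq> z (k+2) \<and> w \<noteq> (\<lambda>i. - z (k+2) i) \<longrightarrow>
            \<bar>Lf d \<alpha> w\<bar> \<ge> \<bar>Lf d \<alpha> (z (k+1))\<bar>)
       \<and> \<bar>Lf d \<alpha> (z (k+1))\<bar> > \<bar>Lf d \<alpha> (z (k+2))\<bar>
       \<and> 1 / (2 * Dq d z (k+2) (d-1) * Bq d z (k+1) ^ (d-1))
           \<le> \<bar>Lf d \<alpha> (z (k+1))\<bar> * ulnorm d (z (k+1)) ^ (d-1)
       \<and> \<bar>Lf d \<alpha> (z (k+1))\<bar> * ulnorm d (z (k+1)) ^ (d-1)
           \<le> 3 / (2 * Dq d z (k+2) (d-1) * Bq d z (k+1) ^ (d-1))
       \<and> (\<forall>w\<in>ivecs d. (\<not> (\<exists>t::int. w = (\<lambda>i. t * z (k+1) i))) \<and>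
            w \<noteq> z (k+2) \<and> w \<noteq> (\<lambda>i. - z (k+2) i) \<and>
            ulnorm d (z (k+1)) \<le> ulnorm d w \<and> ulnorm d w \<le> ulnorm d (z (k+2)) \<longrightarrow>
            \<bar>Lf d \<alpha> w\<bar> * ulnorm d w ^ (d-1) \<ge>
              min (1 / (2 * Dq d z (k+1) (d-1)))
                  (Dq d z (k+1) 2 ^ (d-1) / (2 * Dq d z (k+2) (d-1) * Bq d z (k+1) ^ (d-1))))"
proof -
  interpret adjacent_balls d k z \<alpha>
    using assms by unfold_locales
  have n1_pow: "0 < n1 ^ (d-1)" using n1_pos by simp
  have "1 / (2 * g2) * n1 ^ (d-1) \<le> \<bar>e1\<bar> * n1 ^ (d-1)"
    by (rule mult_right_mono) (use e1_bounds n1_pow in auto)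
  moreover have "\<bar>e1\<bar> * n1 ^ (d-1) \<le> 3 / (2 * g2) * n1 ^ (d-1)"
    by (rule mult_right_mono) (use e1_bounds n1_pow in auto)
  ultimately show ?thesis
    unfolding Dq12_eq unfolding Dq_Bq_eq Dq1_eq
    using Lf_z1_minimal e1_gt_e2 Lf_lower_bound by auto
qed

end
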